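(* The unique typical subrank of real $3\times3\times3$ tensors is $2$, and the unique typical subrank of real $3\times3\times4$ tensors is $2$.
   Context: For $r \geq 0$ let $I_r := \sum_{j=1}^r e_j \otimes e_j \otimes e_j$. The subrank of $T \in \mathbb{R}^{n_1} \otimes \mathbb{R}^{n_2} \otimes \mathbb{R}^{n_3}$ is $Q(T) := \max\{ r \mid \exists\ \mathbb{R}\text{-linear } \varphi_i : \mathbb{R}^{n_i} \to \mathbb{R}^r,\ (\varphi_1 \otimes \varphi_2 \otimes \varphi_3) T = I_r\}$. An integer $r$ is a typical subrank of the format $n_1\times n_2\times n_3$ if $\{T \mid Q(T) = r\}$ contains a nonempty Euclidean-open subset of $\mathbb{R}^{n_1} \otimes \mathbb{R}^{n_2} \otimes \mathbb{R}^{n_3}$. *)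

theory Defs
  imports "HOL-Analysis.Analysis"
begin

text \<open>A real tensor of format n1 x n2 x n3 is an element of real^'c^'b^'a with
  CARD('a) = n1, CARD('b) = n2, CARD('c) = n3; its entries are T$i$j$k.
  An R-linear map R^{n} \<rightarrow> R^r is given by its r x n matrix;
  a matrix is encoded as A :: nat \<Rightarrow> 'a \<Rightarrow> real, whose rows a < r are used.\<close>

definition tensor_restricts_to_unit ::
  "real^'c^'b^'a \<Rightarrow> nat \<Rightarrow> bool" where
  "tensor_restricts_to_unit T r \<longleftrightarrow>
     (\<exists>(A :: nat \<Rightarrow> 'a \<Rightarrow> real) (B :: nat \<Rightarrow> 'b \<Rightarrow> real) (C :: nat \<Rightarrow> 'c \<Rightarrow> real).
        \<forall>a<r. \<forall>b<r. \<forall>c<r.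
          (\<Sum>i\<in>UNIV. \<Sum>j\<in>UNIV. \<Sum>k\<in>UNIV. A a i * B b j * C c k * T$i$j$k)
            = (if a = b \<and> b = c then 1 else 0))"

definition subrank :: "real^'c^'b^'a \<Rightarrow> nat" where
  "subrank T = (GREATEST r. tensor_restricts_to_unit T r)"

definition typical_subrank :: "(real^'c^'b^'a) itself \<Rightarrow> nat \<Rightarrow> bool" where
  "typical_subrank _ r \<longleftrightarrow>
     (\<exists>U :: (real^'c^'b^'a) set. open U \<and> U \<noteq> {} \<and> (\<forall>T\<in>U. subrank T = r))"

end

theory Submission
  imports Defs
begin

(* A tensor has subrank at least 2 as soon as it contains a 2x2x2 subtensor equivalent to I_2,
   which happens when some combination of its slices has a singular 2x2 block (or is a singular
   matrix) while another slice pairs nontrivially with the corresponding kernel vectors.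
   Near e_1 (x) e_1 (x) e_k1 + e_2 (x) e_2 (x) e_k2 such a block is found by the intermediate value
   theorem applied to a pencil of 2x2 minors, so the subrank is at least 2 on an open set.
   Conversely every tensor can be perturbed to subrank at least 2: a real pencil of 3x3 matrices
   always has a singular member, since det (-A) = - det A in odd size.
   Subrank 3 forces some nonzero combination of the three 3x3 slices to have rank one. With at
   most four slices, the tensors with such a combination form a closed set which is the
   differentiable image of a null set, by a dimension count; hence it is negligible. So the
   subrank is exactly 2 on a dense open set, and no other value is attained on an open set. *)

definition tensor_apply ::
  "real^'c^'b^'a \<Rightarrow> ('a \<Rightarrow> real) \<Rightarrow> ('b \<Rightarrow> real) \<Rightarrow> ('c \<Rightarrow> real) \<Rightarrow> real" where
  "tensor_apply T a b c = (\<Sum>i\<in>UNIV. \<Sum>j\<in>UNIV. \<Sum>k\<in>UNIV. a i * b j * c k * T$i$j$k)"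

lemma tensor_restricts_to_unit_iff:
  "tensor_restricts_to_unit T r \<longleftrightarrow>
     (\<exists>A B C. \<forall>a<r. \<forall>b<r. \<forall>c<r.
        tensor_apply T (A a) (B b) (C c) = (if a = b \<and> b = c then 1 else 0))"
  unfolding tensor_restricts_to_unit_def tensor_apply_def ..

lemma tensor_apply_left_add:
  "tensor_apply T (\<lambda>i. a i + x * a' i) b c = tensor_apply T a b c + x * tensor_apply T a' b c"
  by (simp add: tensor_apply_def algebra_simps sum.distrib sum_distrib_left)

lemma tensor_apply_middle_add:
  "tensor_apply T a (\<lambda>j. b j + y * b' j) c = tensor_apply T a b c + y * tensor_apply T a b' c"
  by (simp add: tensor_apply_def algebra_simps sum.distrib sum_distrib_left)

lemma tensor_apply_right_diff_divide:
  "tensor_apply T a b (\<lambda>k. (c k - z * c' k) / w) = (tensor_apply T a b c - z * tensor_apply T a b c') / w"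
  by (simp add: tensor_apply_def algebra_simps sum.distrib sum_distrib_left sum_subtractf
      sum_divide_distrib diff_divide_distrib)

lemma tensor_restricts_to_unit_0: "tensor_restricts_to_unit T 0"
  unfolding tensor_restricts_to_unit_def by simp

lemma tensor_restricts_to_unit_mono:
  assumes "tensor_restricts_to_unit T r" "r' \<le> r"
  shows "tensor_restricts_to_unit T r'"
proof -
  from assms(1) obtain A B C where "\<forall>a<r. \<forall>b<r. \<forall>c<r.
      (\<Sum>i\<in>UNIV. \<Sum>j\<in>UNIV. \<Sum>k\<in>UNIV. A a i * B b j * C c k * T$i$j$k)
        = (if a = b \<and> b = c then 1 else 0)"
    unfolding tensor_restricts_to_unit_def by blast
  with assms(2) show ?thesis
    unfolding tensor_restricts_to_unit_def by (intro exI[of _ A] exI[of _ B] exI[of _ C]) simp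
qed

lemma card_le_DIM_of_biorthogonal:
  fixes v :: "nat \<Rightarrow> 'v::euclidean_space" and f :: "nat \<Rightarrow> 'v \<Rightarrow> real"
  assumes lin: "\<And>b. linear (f b)"
    and biorth: "\<And>n b. n < m \<Longrightarrow> b < m \<Longrightarrow> f b (v n) = (if n = b then 1 else 0)"
  shows "m \<le> DIM('v)"
proof -
  have inj: "inj_on v {..<m}"
  proof (rule inj_onI, rule ccontr)
    fix n n' assume "n \<in> {..<m}" "n' \<in> {..<m}" "v n = v n'" "n \<noteq> n'"
    then show False using biorth[of n n] biorth[of n' n] by simp
  qed
  have "independent (v ` {..<m})"
  proof
    assume "dependent (v ` {..<m})"
    then obtain u where u: "\<exists>x\<in>v ` {..<m}. u x \<noteq> 0" "(\<Sum>x\<in>v ` {..<m}. u x *\<^sub>R x) = 0"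
      by (auto simp: dependent_finite)
    have "u (v b) = 0" if "b < m" for b
    proof -
      have "0 = f b (\<Sum>n<m. u (v n) *\<^sub>R v n)"
        using u(2) by (simp add: sum.reindex[OF inj] linear_0[OF lin])
      also have "\<dots> = (\<Sum>n<m. u (v n) * (if n = b then 1 else 0))"
        by (simp add: linear_sum[OF lin] linear_scale[OF lin] biorth that)
      also have "\<dots> = u (v b)"
        using that by (simp add: if_distrib cong: if_cong)
      finally show ?thesis by simp
    qed
    then show False using u(1) by auto
  qed
  then have "card (v ` {..<m}) \<le> DIM('v)" by (simp add: independent_bound)
  then show ?thesis by (simp add: card_image[OF inj])
qed

lemma tensor_restricts_to_unit_le_card:
  fixes T :: "real^'c^'b^'a"
  assumes "tensor_restricts_to_unit T r"
  shows "r \<le> CARD('a)"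
proof -
  obtain A B C where ABC: "\<And>a b c. a < r \<Longrightarrow> b < r \<Longrightarrow> c < r \<Longrightarrow>
      tensor_apply T (A a) (B b) (C c) = (if a = b \<and> b = c then 1 else 0)"
    using assms unfolding tensor_restricts_to_unit_iff by blast
  have "r \<le> DIM(real^'a)"
  proof (rule card_le_DIM_of_biorthogonal)
    show "linear (\<lambda>x :: real^'a. tensor_apply T (($) x) (B b) (C b))" for b
      by (rule linearI) (simp_all add: tensor_apply_def algebra_simps sum.distrib sum_distrib_left)
    show "tensor_apply T (($) (vec_lambda (A n))) (B b) (C b) = (if n = b then 1 else 0)"
      if "n < r" "b < r" for n b
      using ABC[OF that(1) that(2) that(2)] by (simp add: vec_lambda_inverse[OF UNIV_I])
  qed
  then show ?thesis by simp
qed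

lemma le_subrank_iff:
  fixes T :: "real^'c^'b^'a"
  shows "r \<le> subrank T \<longleftrightarrow> tensor_restricts_to_unit T r"
proof
  have "tensor_restricts_to_unit T (subrank T)"
    unfolding subrank_def
    by (rule GreatestI_ex_nat[OF _ tensor_restricts_to_unit_le_card])
      (use tensor_restricts_to_unit_0 in blast)
  then show "r \<le> subrank T \<Longrightarrow> tensor_restricts_to_unit T r"
    by (rule tensor_restricts_to_unit_mono)
  show "tensor_restricts_to_unit T r \<Longrightarrow> r \<le> subrank T"
    unfolding subrank_def by (rule Greatest_le_nat[OF _ tensor_restricts_to_unit_le_card])
qed

lemma tensor_restricts_to_unit_2I:
  assumes "tensor_apply T a b c = 1" "tensor_apply T u b c = 0" "tensor_apply T a v c = 0"
    and "tensor_apply T u v c = 0" and "tensor_apply T u v c' \<noteq> 0"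
  shows "tensor_restricts_to_unit T 2"
proof -
  \<comment> \<open>Shearing \<open>a\<close> along \<open>u\<close> and \<open>b\<close> along \<open>v\<close> clears the mixed \<open>c'\<close>-entries;
    subtracting a multiple of \<open>c\<close> from \<open>c'\<close> then clears the remaining one.\<close>
  define \<kappa> where "\<kappa> = tensor_apply T u v c'"
  define x where "x = - tensor_apply T a v c' / \<kappa>"
  define y where "y = - tensor_apply T u b c' / \<kappa>"
  define a' where "a' = (\<lambda>i. a i + x * u i)"
  define b' where "b' = (\<lambda>j. b j + y * v j)"
  define z where "z = tensor_apply T a' b' c'"
  define c'' where "c'' = (\<lambda>k. (c' k - z * c k) / \<kappa>)"
  have "\<kappa> \<noteq> 0" using assms(5) by (simp add: \<kappa>_def)
  have a'b': "tensor_apply T a' b' c = 1" "tensor_apply T a' v c = 0" "tensor_apply T u b' c = 0"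
    "tensor_apply T a' v c' = 0" "tensor_apply T u b' c' = 0"
    unfolding a'_def b'_def tensor_apply_left_add tensor_apply_middle_add
    using assms \<open>\<kappa> \<noteq> 0\<close> by (simp_all add: x_def y_def \<kappa>_def)
  have c'': "tensor_apply T a' b' c'' = 0" "tensor_apply T a' v c'' = 0"
    "tensor_apply T u b' c'' = 0" "tensor_apply T u v c'' = 1"
    unfolding c''_def tensor_apply_right_diff_divide
    using a'b' assms(4) \<open>\<kappa> \<noteq> 0\<close> by (simp_all add: z_def \<kappa>_def)
  show ?thesis
    unfolding tensor_restricts_to_unit_iff
    using a'b' c'' assms(4)
    by (intro exI[of _ "\<lambda>n. if n = 0 then a' else u"] exI[of _ "\<lambda>n. if n = 0 then b' else v"]
        exI[of _ "\<lambda>n. if n = 0 then c else c''"]) (auto simp: less_2_cases_iff)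
qed

definition slice_combination :: "real^'c^'b^'a \<Rightarrow> ('c \<Rightarrow> real) \<Rightarrow> real^'b^'a" where
  "slice_combination T c = (\<chi> i j. \<Sum>k\<in>UNIV. c k * T$i$j$k)"

lemma tensor_apply_eq_slice_combination:
  "tensor_apply T a b c = (\<Sum>i\<in>UNIV. \<Sum>j\<in>UNIV. a i * b j * slice_combination T c $ i $ j)"
  by (simp add: tensor_apply_def slice_combination_def sum_distrib_left mult_ac)

lemma tensor_apply_vec_nth:
  "tensor_apply T (($) x) (($) y) c = x \<bullet> (slice_combination T c *v y)"
  by (simp add: tensor_apply_eq_slice_combination inner_vec_def matrix_vector_mult_def
      sum_distrib_left mult_ac)

lemma slice_combination_add_scaleR:
  "slice_combination (T + \<delta> *\<^sub>R E) c = slice_combination T c + \<delta> *\<^sub>R slice_combination E c"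
  by (simp add: slice_combination_def vec_eq_iff algebra_simps sum.distrib sum_distrib_left)

lemma slice_combination_add:
  "slice_combination T (\<lambda>k. c k + c' k) = slice_combination T c + slice_combination T c'"
  by (simp add: slice_combination_def vec_eq_iff algebra_simps sum.distrib)

lemma slice_combination_single:
  "slice_combination T (\<lambda>k. if k = k0 then x else 0) = x *\<^sub>R (\<chi> i j. T$i$j$k0)"
proof -
  have "(if k = k0 then x else 0) * T$i$j$k = (if k = k0 then x * T$i$j$k0 else 0)" for i j k
    by simp
  then show ?thesis by (simp add: slice_combination_def vec_eq_iff)
qed

lemma tensor_restricts_to_unit_2_of_kernel_vectors:
  fixes T :: "real^'c^'b^'a" and c c' :: "'c \<Rightarrow> real"
  defines "N \<equiv> slice_combination T c"
  assumes "N \<noteq> 0" and "N *v v = 0" and "u v* N = 0"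
    and "u \<bullet> (slice_combination T c' *v v) \<noteq> 0"
  shows "tensor_restricts_to_unit T 2"
proof -
  obtain p q where pq: "N $ p $ q \<noteq> 0"
    using assms(2) by (metis vec_eq_iff zero_index)
  let ?a = "axis p (1 / N $ p $ q)" and ?b = "axis q 1"
  show ?thesis
  proof (rule tensor_restricts_to_unit_2I[of T "($) ?a" "($) ?b" c "($) u" "($) v" c'],
      unfold tensor_apply_vec_nth N_def[symmetric])
    show "?a \<bullet> (N *v ?b) = 1"
      using pq by (simp add: inner_axis' matrix_vector_mult_basis column_def)
    show "u \<bullet> (N *v ?b) = 0"
      using assms(4) by (simp add: dot_lmul_matrix[symmetric] inner_axis)
  qed (use assms in simp_all)
qed

lemma matrix_vector_mult_axis:
  fixes A :: "real^'n^'m"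
  shows "A *v axis j x = x *\<^sub>R column j A"
proof -
  have "axis j x = x *\<^sub>R axis j 1" by (simp add: vec_eq_iff axis_def)
  then show ?thesis by (simp add: matrix_vector_mult_scaleR matrix_vector_mult_basis)
qed

lemma tensor_restricts_to_unit_2_of_singular_block:
  fixes T :: "real^'c^'b^'a" and c c' :: "'c \<Rightarrow> real"
  defines "N \<equiv> slice_combination T c" and "M \<equiv> slice_combination T c'"
  assumes "i \<noteq> i'" "j \<noteq> j'"
    and singular: "N$i$j * N$i'$j' = N$i$j' * N$i'$j" and "N$i'$j' \<noteq> 0"
    and "N$i'$j' * N$i'$j' * M$i$j - N$i'$j' * N$i'$j * M$i$j'
           - N$i$j' * N$i'$j' * M$i'$j + N$i$j' * N$i'$j * M$i'$j' \<noteq> 0"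
  shows "tensor_restricts_to_unit T 2"
proof -
  \<comment> \<open>\<open>u\<close> and \<open>v\<close> are the left and right kernel vectors of the singular \<open>2 \<times> 2\<close> block of \<open>N\<close>.\<close>
  let ?a = "axis i' (1 / N$i'$j')" and ?b = "axis j' 1"
  let ?u = "axis i (N$i'$j') - axis i' (N$i$j')" and ?v = "axis j (N$i'$j') - axis j' (N$i'$j)"
  show ?thesis
  proof (rule tensor_restricts_to_unit_2I[of T "($) ?a" "($) ?b" c "($) ?u" "($) ?v" c'],
      unfold tensor_apply_vec_nth N_def[symmetric] M_def[symmetric])
    have "?u \<bullet> (N *v ?v) = N$i'$j' * (N$i$j * N$i'$j' - N$i$j' * N$i'$j)"
      by (simp add: matrix_vector_mult_diff_distrib matrix_vector_mult_axis inner_diff_left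
          inner_axis' column_def algebra_simps)
    then show "?u \<bullet> (N *v ?v) = 0"
      using singular by simp
  qed (use assms in \<open>simp_all add: matrix_vector_mult_diff_distrib matrix_vector_mult_axis
      inner_diff_left inner_axis' column_def algebra_simps\<close>)
qed

lemma abs_entry_le_norm:
  fixes T :: "real^'c^'b^'a"
  shows "\<bar>T$i$j$k\<bar> \<le> norm T"
proof -
  have "\<bar>T$i$j$k\<bar> \<le> norm (T$i$j)" by (rule component_le_norm_cart)
  also have "\<dots> \<le> norm (T$i)" by (rule Finite_Cartesian_Product.norm_nth_le)
  also have "\<dots> \<le> norm T" by (rule Finite_Cartesian_Product.norm_nth_le)
  finally show ?thesis .
qed

lemma pencil_entry_close:
  fixes x x0 y y0 t :: real
  assumes "\<bar>x - x0\<bar> < 1/20" "\<bar>y - y0\<bar> < 1/20" "\<bar>t\<bar> \<le> 1/2"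
  shows "\<bar>(x - t * y) - (x0 - t * y0)\<bar> < 1/10"
proof -
  have "\<bar>t * (y - y0)\<bar> \<le> 1/2 * (1/20)"
    unfolding abs_mult using assms(2,3) by (intro mult_mono) auto
  moreover have "(x - t * y) - (x0 - t * y0) = (x - x0) - t * (y - y0)"
    by (simp add: algebra_simps)
  ultimately show ?thesis using assms(1) abs_triangle_ineq4[of "x - x0" "t * (y - y0)"] by linarith
qed

lemma det2_sign_near:
  fixes n11 n12 n21 n22 :: real
  assumes "\<bar>n22 - 1\<bar> < 1/10" "\<bar>n12\<bar> < 1/10" "\<bar>n21\<bar> < 1/10"
  shows "n11 > 2/5 \<Longrightarrow> n11 * n22 - n12 * n21 > 0"
    and "n11 < - 2/5 \<Longrightarrow> n11 * n22 - n12 * n21 < 0"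
proof -
  have "\<bar>n12 * n21\<bar> < 1/10 * (1/10)" using abs_mult_less[OF assms(2,3)] by (simp add: abs_mult)
  moreover have "n22 > 9/10" using assms(1) by linarith
  ultimately show "n11 > 2/5 \<Longrightarrow> n11 * n22 - n12 * n21 > 0"
    and "n11 < - 2/5 \<Longrightarrow> n11 * n22 - n12 * n21 < 0"
    using mult_strict_mono[of "2/5" n11 "9/10" n22] mult_strict_mono[of "2/5" "- n11" "9/10" n22]
    by auto
qed

lemma adjugate_pairing_pos_near:
  fixes n12 n21 n22 m11 m12 m21 m22 :: real
  assumes "\<bar>n22 - 1\<bar> < 1/10" "\<bar>n12\<bar> < 1/10" "\<bar>n21\<bar> < 1/10"
    and "\<bar>m11 - 1\<bar> < 1/10" "\<bar>m12\<bar> < 1/10" "\<bar>m21\<bar> < 1/10" "\<bar>m22\<bar> < 1/10"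
  shows "n22 * n22 * m11 - n22 * n21 * m12 - n12 * n22 * m21 + n12 * n21 * m22 > 0"
proof -
  have n22: "n22 > 9/10" "\<bar>n22\<bar> < 11/10" and "m11 > 9/10" using assms by linarith+
  then have "n22 * n22 * m11 > 9/10 * (9/10) * (9/10)"
    by (intro mult_strict_mono) auto
  moreover have "\<bar>n22 * n21 * m12\<bar> < 11/10 * (1/10) * (1/10)"
    unfolding abs_mult using n22(2) assms(3,5) by (intro mult_strict_mono) simp_all
  moreover have "\<bar>n12 * n22 * m21\<bar> < 1/10 * (11/10) * (1/10)"
    unfolding abs_mult using n22(2) assms(2,6) by (intro mult_strict_mono) simp_all
  moreover have "\<bar>n12 * n21 * m22\<bar> < 1/10 * (1/10) * (1/10)"
    unfolding abs_mult using assms(2,3,7) by (intro mult_strict_mono) simp_all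
  ultimately show ?thesis by linarith
qed

lemma tensor_restricts_to_unit_2_near_two_units:
  fixes T :: "real^'c^'b^'a" and i i' :: 'a and j j' :: 'b and k1 k2 :: 'c
  defines "T0 \<equiv> \<chi> a b k. if (a, b, k) = (i, j, k1) \<or> (a, b, k) = (i', j', k2) then 1 else 0"
  assumes "i \<noteq> i'" "j \<noteq> j'" "k1 \<noteq> k2" and "dist T T0 < 1/20"
  shows "tensor_restricts_to_unit T 2"
proof -
  have entry: "\<bar>T$a$b$k - T0$a$b$k\<bar> < 1/20" for a b k
    using abs_entry_le_norm[of "T - T0" a b k] assms(5) by (simp add: dist_norm)
  \<comment> \<open>The pencil \<open>T\<^sub>k\<^sub>2 - t T\<^sub>k\<^sub>1\<close> is close to \<open>diag(-t, 1)\<close> on the block \<open>{i, i'} \<times> {j, j'}\<close>,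
    so the determinant of that block changes sign on \<open>[-1/2, 1/2]\<close>.\<close>
  define c where "c t = (\<lambda>k. (if k = k2 then 1 else 0) + (if k = k1 then - t else 0))" for t :: real
  define N where "N t = slice_combination T (c t)" for t
  have N: "N t $a$b = T$a$b$k2 - t * T$a$b$k1" for t a b
    by (simp add: N_def c_def slice_combination_add slice_combination_single)
  have close: "\<bar>N t $a$b - (T0$a$b$k2 - t * T0$a$b$k1)\<bar> < 1/10" if "\<bar>t\<bar> \<le> 1/2" for t a b
    unfolding N using entry[of a b k2] entry[of a b k1] that by (rule pencil_entry_close)
  have block: "\<bar>N t $i'$j' - 1\<bar> < 1/10" "\<bar>N t $i$j'\<bar> < 1/10" "\<bar>N t $i'$j\<bar> < 1/10"
    "\<bar>N t $i$j + t\<bar> < 1/10" if "\<bar>t\<bar> \<le> 1/2" for t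
    using close[OF that, of i' j'] close[OF that, of i j'] close[OF that, of i' j] close[OF that, of i j]
      assms(2-4) by (simp_all add: T0_def)
  define g where "g t = N t $i$j * N t $i'$j' - N t $i$j' * N t $i'$j" for t
  have "N (-1/2) $i$j > 2/5" "N (1/2) $i$j < - 2/5"
    using block(4)[of "-1/2"] block(4)[of "1/2"] unfolding abs_less_iff by auto
  then have "g (-1/2) > 0" "g (1/2) < 0"
    unfolding g_def using det2_sign_near[OF block(1-3)] by auto
  moreover have "continuous_on {-1/2..1/2} g"
    unfolding g_def N by (intro continuous_intros)
  ultimately obtain t where t: "\<bar>t\<bar> \<le> 1/2" "g t = 0"
    using IVT2'[of g "1/2" 0 "-1/2"] by force
  have "\<bar>T$i$j$k1 - 1\<bar> < 1/10" "\<bar>T$i$j'$k1\<bar> < 1/10" "\<bar>T$i'$j$k1\<bar> < 1/10" "\<bar>T$i'$j'$k1\<bar> < 1/10"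
    using entry[of i j k1] entry[of i j' k1] entry[of i' j k1] entry[of i' j' k1] assms(2-4)
    by (simp_all add: T0_def)
  from adjugate_pairing_pos_near[OF block(1-3)[OF t(1)] this]
  show ?thesis
    using t(2) block(1)[OF t(1)]
    by (intro tensor_restricts_to_unit_2_of_singular_block[OF assms(2,3),
          of T "c t" "\<lambda>k. if k = k1 then 1 else 0"])
      (auto simp: g_def N_def[symmetric] slice_combination_single)
qed

lemma exists_small_scaleR_perturbation:
  fixes x e :: "'v::real_normed_vector"
  assumes "\<epsilon> > 0"
  obtains d where "d > 0" "\<And>\<delta>. \<bar>\<delta>\<bar> \<le> d \<Longrightarrow> dist (x + \<delta> *\<^sub>R e) x < \<epsilon>"
proof -
  define d where "d = \<epsilon> / (norm e + 1)"
  have pos: "norm e + 1 > 0" by (simp add: add_nonneg_pos)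
  have "d > 0" using assms pos by (simp add: d_def)
  moreover have "dist (x + \<delta> *\<^sub>R e) x < \<epsilon>" if "\<bar>\<delta>\<bar> \<le> d" for \<delta>
  proof -
    have "dist (x + \<delta> *\<^sub>R e) x = \<bar>\<delta>\<bar> * norm e" by (simp add: dist_norm)
    also have "\<dots> \<le> d * norm e" using that by (simp add: mult_right_mono)
    also have "\<dots> < d * (norm e + 1)" using \<open>d > 0\<close> by simp
    also have "\<dots> = \<epsilon>" using pos by (simp add: d_def)
    finally show ?thesis .
  qed
  ultimately show ?thesis using that by blast
qed

lemma exists_small_nonroot_quadratic:
  fixes d p q r :: real
  assumes "d > 0"
  obtains \<delta> where "0 < \<delta>" "\<delta> \<le> d" "(p + \<delta>) * (q + \<delta>) \<noteq> r"
proof -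
  \<comment> \<open>A monic quadratic has at most two roots, so one of \<open>d, d/2, d/4\<close> is not a root.\<close>
  have "\<exists>\<delta>\<in>{d, d/2, d/4}. (p + \<delta>) * (q + \<delta>) \<noteq> r"
  proof (rule ccontr)
    assume "\<not> ?thesis"
    then have "(p + d) * (q + d) = r" "(p + d/2) * (q + d/2) = r" "(p + d/4) * (q + d/4) = r"
      by auto
    then have "d/2 * (3*d/2 + p + q) = 0" "d/4 * (3*d/4 + p + q) = 0"
      by (simp_all add: algebra_simps)
    then show False using assms by simp
  qed
  then obtain \<delta> where "\<delta> \<in> {d, d/2, d/4}" "(p + \<delta>) * (q + \<delta>) \<noteq> r" ..
  then show ?thesis using that[of \<delta>] assms by auto
qed

lemma exists_small_nonroot_linear:
  fixes d p q :: real
  assumes "d > 0" "q \<noteq> 0"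
  obtains \<delta> where "0 < \<delta>" "\<delta> \<le> d" "p + \<delta> * q \<noteq> 0"
proof -
  have "\<exists>\<delta>\<in>{d, d/2}. p + \<delta> * q \<noteq> 0"
  proof (rule ccontr)
    assume "\<not> ?thesis"
    then have "p + d * q = 0" "p + d/2 * q = 0" by auto
    then have "d * q = 0" by linarith
    then show False using assms by simp
  qed
  then obtain \<delta> where "\<delta> \<in> {d, d/2}" "p + \<delta> * q \<noteq> 0" ..
  then show ?thesis using that[of \<delta>] assms by auto
qed

lemma det_uminus_odd:
  fixes A :: "real^'n^'n"
  assumes "odd CARD('n)"
  shows "det (- A) = - det A"
proof -
  have "- A = mat (- 1) ** A"
    unfolding matrix_matrix_mult_def mat_def
    by (auto simp: vec_eq_iff if_distrib if_distribR sum.delta'[OF finite] cong: if_cong)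
  then have "det (- A) = (- 1) ^ CARD('n) * det A"
    by (simp add: det_mul flip: matrix_scaleR)
  then show ?thesis using assms by simp
qed

lemma exists_singular_pencil:
  fixes A B :: "real^'n^'n"
  assumes "odd CARD('n)"
  obtains \<theta> where "det (cos \<theta> *\<^sub>R A + sin \<theta> *\<^sub>R B) = 0"
proof -
  define g where "g \<theta> = det (cos \<theta> *\<^sub>R A + sin \<theta> *\<^sub>R B)" for \<theta>
  have cont: "continuous_on {0..pi} g"
    unfolding g_def det_def by (intro continuous_intros)
  have "g pi = - g 0"
    using det_uminus_odd[OF assms, of A] by (simp add: g_def)
  then obtain \<theta> where "g \<theta> = 0"
    using IVT'[of g 0 0 pi] IVT2'[of g pi 0 0] cont by (cases "g 0 \<le> 0") force+
  then show ?thesis using that by (simp add: g_def)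
qed

lemma cos_sin_combination_nonzero:
  fixes a b c d \<theta> :: real
  assumes "a * d \<noteq> b * c"
  shows "cos \<theta> * a + sin \<theta> * b \<noteq> 0 \<or> cos \<theta> * c + sin \<theta> * d \<noteq> 0"
proof (rule ccontr)
  assume "\<not> ?thesis"
  moreover have "cos \<theta> * (a * d - b * c) = d * (cos \<theta> * a + sin \<theta> * b) - b * (cos \<theta> * c + sin \<theta> * d)"
    "sin \<theta> * (a * d - b * c) = a * (cos \<theta> * c + sin \<theta> * d) - c * (cos \<theta> * a + sin \<theta> * b)"
    by (simp_all add: algebra_simps)
  ultimately have "cos \<theta> * (a * d - b * c) = 0" "sin \<theta> * (a * d - b * c) = 0"
    by simp_all
  then show False using assms sin_cos_squared_add[of \<theta>] by simp
qed

lemma exists_kernel_vector: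
  fixes N :: "real^'n^'n"
  assumes "det N = 0"
  obtains v where "v \<noteq> 0" "N *v v = 0"
  using assms matrix_nonfull_linear_equations_eq[of N] det_eq_0_rank[of N] by auto

lemma tensor_restricts_to_unit_2_near_of_kernel_vectors:
  fixes T :: "real^'c^'b^'a" and c :: "'c \<Rightarrow> real"
  defines "N \<equiv> slice_combination T c"
  assumes "N \<noteq> 0" "N *v v = 0" "u v* N = 0" "u \<noteq> 0" "v \<noteq> 0" "c k3 = 0" "\<epsilon> > 0"
  obtains T' where "dist T' T < \<epsilon>" "tensor_restricts_to_unit T' 2"
proof -
  \<comment> \<open>Adding \<open>\<delta> u v\<^sup>T\<close> to the slice \<open>k3\<close> leaves \<open>N\<close> unchanged and moves the pairing
    \<open>u \<bullet> (M *v v)\<close> of that slice \<open>M\<close> with the kernel vectors by \<open>\<delta> |u|\<^sup>2 |v|\<^sup>2\<close>.\<close>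
  define E :: "real^'c^'b^'a" where "E = (\<chi> i j k. if k = k3 then u$i * v$j else 0)"
  define c' where "c' = (\<lambda>k. if k = k3 then 1 else 0 :: real)"
  define K where "K = u \<bullet> (slice_combination T c' *v v)"
  have "(u \<bullet> u) * (v \<bullet> v) \<noteq> 0" using assms(5,6) by simp
  obtain d where d: "d > 0" "\<And>\<delta>. \<bar>\<delta>\<bar> \<le> d \<Longrightarrow> dist (T + \<delta> *\<^sub>R E) T < \<epsilon>"
    using exists_small_scaleR_perturbation[OF \<open>\<epsilon> > 0\<close>] by blast
  obtain \<delta> where \<delta>: "0 < \<delta>" "\<delta> \<le> d" "K + \<delta> * ((u \<bullet> u) * (v \<bullet> v)) \<noteq> 0"
    using exists_small_nonroot_linear[OF d(1) \<open>(u \<bullet> u) * (v \<bullet> v) \<noteq> 0\<close>] by blast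
  have "slice_combination E c = 0"
    using assms(7) by (simp add: slice_combination_def E_def vec_eq_iff if_distrib cong: if_cong)
  moreover have "slice_combination E c' = (\<chi> i j. u$i * v$j)"
    by (simp add: c'_def slice_combination_single E_def vec_eq_iff)
  moreover have "u \<bullet> ((\<chi> i j. u$i * v$j) *v v) = (u \<bullet> u) * (v \<bullet> v)"
    by (simp add: matrix_vector_mult_def inner_vec_def sum_distrib_left sum_product mult_ac)
      (rule sum.swap)
  ultimately have "tensor_restricts_to_unit (T + \<delta> *\<^sub>R E) 2"
    using assms(2-4) \<delta>(3) unfolding N_def
    by (intro tensor_restricts_to_unit_2_of_kernel_vectors[where c = c and c' = c' and u = u and v = v])
      (simp_all add: slice_combination_add_scaleR K_def algebra_simps
        scaleR_matrix_vector_assoc[symmetric] inner_add_right)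
  moreover have "dist (T + \<delta> *\<^sub>R E) T < \<epsilon>" using d(2) \<delta>(1,2) by simp
  ultimately show ?thesis using that by blast
qed

lemma tensor_restricts_to_unit_2_near_of_minor:
  fixes T :: "real^'c^'n^'n"
  assumes "odd CARD('n)" "k3 \<noteq> k1" "k3 \<noteq> k2"
    and minor: "T$i$j$k1 * T$i'$j'$k2 \<noteq> T$i$j$k2 * T$i'$j'$k1"
    and "\<epsilon> > 0"
  obtains T' where "dist T' T < \<epsilon>" "tensor_restricts_to_unit T' 2"
proof -
  obtain \<theta> where \<theta>: "det (cos \<theta> *\<^sub>R (\<chi> i j. T$i$j$k1) + sin \<theta> *\<^sub>R (\<chi> i j. T$i$j$k2)) = 0"
    using exists_singular_pencil[OF assms(1)] .
  define c where "c = (\<lambda>k. (if k = k1 then cos \<theta> else 0) + (if k = k2 then sin \<theta> else 0))"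
  define N where "N = slice_combination T c"
  have N: "N = cos \<theta> *\<^sub>R (\<chi> i j. T$i$j$k1) + sin \<theta> *\<^sub>R (\<chi> i j. T$i$j$k2)"
    unfolding N_def c_def slice_combination_add slice_combination_single ..
  have "N \<noteq> 0"
    using cos_sin_combination_nonzero[OF minor, of \<theta>] by (auto simp: N vec_eq_iff)
  moreover obtain v where "v \<noteq> 0" "N *v v = 0"
    using exists_kernel_vector \<theta> N by metis
  moreover obtain u where "u \<noteq> 0" "u v* N = 0"
    using exists_kernel_vector[of "transpose N"] \<theta> N by auto
  moreover have "c k3 = 0" using assms(2,3) by (simp add: c_def)
  ultimately show ?thesis
    using tensor_restricts_to_unit_2_near_of_kernel_vectors[OF _ _ _ _ _ _ \<open>\<epsilon> > 0\<close>] that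
    unfolding N_def by metis
qed

lemma exists_near_nonzero_minor:
  fixes T :: "real^'c^'b^'a"
  assumes "k1 \<noteq> k2" "(i, j) \<noteq> (i', j')" "\<epsilon> > 0"
  obtains T' where "dist T' T < \<epsilon>" "T'$i$j$k1 * T'$i'$j'$k2 \<noteq> T'$i$j$k2 * T'$i'$j'$k1"
proof -
  define E :: "real^'c^'b^'a" where
    "E = (\<chi> a b k. if (a, b, k) = (i, j, k1) \<or> (a, b, k) = (i', j', k2) then 1 else 0)"
  obtain d where d: "d > 0" "\<And>\<delta>. \<bar>\<delta>\<bar> \<le> d \<Longrightarrow> dist (T + \<delta> *\<^sub>R E) T < \<epsilon>"
    using exists_small_scaleR_perturbation[OF \<open>\<epsilon> > 0\<close>] by blast
  obtain \<delta> where \<delta>: "0 < \<delta>" "\<delta> \<le> d"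
    "(T$i$j$k1 + \<delta>) * (T$i'$j'$k2 + \<delta>) \<noteq> T$i$j$k2 * T$i'$j'$k1"
    using exists_small_nonroot_quadratic[OF d(1)] by blast
  show ?thesis
  proof
    show "dist (T + \<delta> *\<^sub>R E) T < \<epsilon>" using d(2) \<delta>(1,2) by simp
    show "(T + \<delta> *\<^sub>R E)$i$j$k1 * (T + \<delta> *\<^sub>R E)$i'$j'$k2 \<noteq>
        (T + \<delta> *\<^sub>R E)$i$j$k2 * (T + \<delta> *\<^sub>R E)$i'$j'$k1"
      using \<delta>(3) assms(1,2) by (auto simp: E_def)
  qed
qed

lemma tensor_restricts_to_unit_2_dense:
  fixes T :: "real^'c^'n^'n"
  assumes "odd CARD('n)" "1 < CARD('n)" "3 \<le> CARD('c)" "\<epsilon> > 0"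
  obtains T' where "dist T' T < \<epsilon>" "tensor_restricts_to_unit T' 2"
proof -
  obtain i i' :: 'n where "i \<noteq> i'"
    using ex_card[of 2 "UNIV :: 'n set"] assms(2) by (auto simp: card_2_iff)
  obtain k1 k2 k3 :: 'c where k: "k1 \<noteq> k2" "k3 \<noteq> k1" "k3 \<noteq> k2"
    using ex_card[of 3 "UNIV :: 'c set"] assms(3) by (auto simp: card_3_iff)
  obtain T1 where T1: "dist T1 T < \<epsilon> / 2"
    "T1$i$i$k1 * T1$i'$i'$k2 \<noteq> T1$i$i$k2 * T1$i'$i'$k1"
    using exists_near_nonzero_minor[OF k(1) _ half_gt_zero[OF assms(4)]] \<open>i \<noteq> i'\<close> by blast
  obtain T2 where T2: "dist T2 T1 < \<epsilon> / 2" "tensor_restricts_to_unit T2 2"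
    using tensor_restricts_to_unit_2_near_of_minor[OF assms(1) k(2,3) T1(2) half_gt_zero[OF assms(4)]] .
  have "dist T2 T < \<epsilon>"
    using dist_triangle[of T2 T T1] T1(1) T2(1) by simp
  with T2(2) show ?thesis using that by blast
qed

definition rank_le_one :: "real^'b^'a \<Rightarrow> bool" where
  "rank_le_one M \<longleftrightarrow> (\<forall>i i' j j'. M$i$j * M$i'$j' = M$i$j' * M$i'$j)"

definition rank_one_slice_tensors :: "(real^'c^'b^'a) set" where
  "rank_one_slice_tensors = {T. \<exists>w. w \<noteq> 0 \<and> rank_le_one (slice_combination T (($) w))}"

lemma tensor_apply_right_sum:
  "tensor_apply T a b (\<lambda>k. \<Sum>l\<in>L. C l k) = (\<Sum>l\<in>L. tensor_apply T a b (C l))"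
  unfolding tensor_apply_def
  by (simp add: sum_distrib_left sum_distrib_right mult_ac sum.swap[of _ L])

lemma matrix_mult_slice_combination:
  "(X ** slice_combination T c ** transpose Y) $ a $ b = tensor_apply T (($) (X$a)) (($) (Y$b)) c"
  unfolding tensor_apply_eq_slice_combination matrix_matrix_mult_def transpose_def
  by (simp add: sum_distrib_left sum_distrib_right mult_ac) (rule sum.swap)

lemma rank_le_one_if_unit_entry_congruent:
  fixes X N N0 Z :: "real^'a^'a"
  assumes "X ** N ** Z = mat 1"
    and "X ** N0 ** Z = (\<chi> a b. if a = a0 then if b = a0 then 1 else 0 else 0)"
  shows "rank_le_one N0"
proof -
  define R where "R = N ** Z"
  define L where "L = X ** N"
  have "X ** R = mat 1" "L ** Z = mat 1"
    using assms(1) by (simp_all add: R_def L_def matrix_mul_assoc)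
  then have "R ** X = mat 1" "Z ** L = mat 1"
    by (simp_all add: matrix_left_right_inverse1)
  then have "N0 = R ** (X ** N0 ** Z) ** L"
    by (metis matrix_mul_assoc matrix_mul_lid matrix_mul_rid)
  also have "\<dots> = R ** (\<chi> a b. if a = a0 then if b = a0 then 1 else 0 else 0) ** L"
    by (simp only: assms(2))
  also have "R ** (\<chi> a b. if a = a0 then if b = a0 then 1 else 0 else 0)
      = (\<chi> i b. if b = a0 then R$i$a0 else 0)"
    by (simp add: matrix_matrix_mult_def vec_eq_iff if_distrib[of "\<lambda>x. _ * x"] cong: if_cong)
  finally have "N0 $ i $ j = R$i$a0 * L$a0$j" for i j
    by (simp add: matrix_matrix_mult_def if_distrib[of "\<lambda>x. x * _"] cong: if_cong)
  then show ?thesis by (simp add: rank_le_one_def)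
qed

lemma tensor_restricts_to_unit_card_imp_rank_one_slice:
  fixes T :: "real^'c^'a^'a"
  assumes "tensor_restricts_to_unit T CARD('a)"
  shows "T \<in> rank_one_slice_tensors"
proof -
  obtain A B C where ABC: "\<And>a b c. a < CARD('a) \<Longrightarrow> b < CARD('a) \<Longrightarrow> c < CARD('a) \<Longrightarrow>
      tensor_apply T (A a) (B b) (C c) = (if a = b \<and> b = c then 1 else 0)"
    using assms unfolding tensor_restricts_to_unit_iff by blast
  obtain h :: "'a \<Rightarrow> nat" where h: "bij_betw h UNIV {0..<CARD('a)}"
    using ex_bij_betw_finite_nat[of "UNIV :: 'a set"] by auto
  then have "0 \<in> range h" by (simp add: bij_betw_def)
  then obtain a0 where "h a0 = 0" by auto
  have hlt: "h a < CARD('a)" for a using h by (auto dest: bij_betwE)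
  have "inj h" using h by (simp add: bij_betw_def)
  define X :: "real^'a^'a" where "X = (\<chi> a i. A (h a) i)"
  define Y :: "real^'a^'a" where "Y = (\<chi> b j. B (h b) j)"
  define N where "N = slice_combination T (\<lambda>k. \<Sum>l<CARD('a). C l k)"
  define N0 where "N0 = slice_combination T (C 0)"
  have "(X ** N ** transpose Y) $ a $ b = (if a = b then 1 else 0)" for a b
  proof -
    have "(X ** N ** transpose Y) $ a $ b = (\<Sum>l<CARD('a). tensor_apply T (A (h a)) (B (h b)) (C l))"
      by (simp add: N_def X_def Y_def matrix_mult_slice_combination tensor_apply_right_sum
          vec_lambda_inverse[OF UNIV_I])
    also have "\<dots> = (\<Sum>l<CARD('a). if a = b \<and> l = h b then 1 else 0)"
      using ABC hlt \<open>inj h\<close> by (intro sum.cong) (auto simp: inj_eq)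
    also have "\<dots> = (if a = b then 1 else 0)"
      using hlt by simp
    finally show ?thesis .
  qed
  then have XNY: "X ** N ** transpose Y = mat 1" by (simp add: vec_eq_iff mat_def)
  have h0: "h a = 0 \<longleftrightarrow> a = a0" for a
    using \<open>h a0 = 0\<close> \<open>inj h\<close> by (metis injD)
  have XN0Y: "X ** N0 ** transpose Y = (\<chi> a b. if a = a0 then if b = a0 then 1 else 0 else 0)"
    using ABC[of "h a" "h b" 0 for a b] hlt
    by (auto simp: vec_eq_iff N0_def X_def Y_def matrix_mult_slice_combination vec_lambda_inverse[OF UNIV_I] h0
        inj_eq[OF \<open>inj h\<close>])
  have "rank_le_one N0"
    by (rule rank_le_one_if_unit_entry_congruent[OF XNY XN0Y])
  moreover have "vec_lambda (C 0) \<noteq> 0"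
  proof
    assume "vec_lambda (C 0) = 0"
    then have "N0 = 0" by (simp add: N0_def slice_combination_def vec_eq_iff fun_eq_iff)
    then show False using arg_cong[OF XN0Y, of "\<lambda>M. M $ a0 $ a0"] by simp
  qed
  ultimately show ?thesis
    unfolding rank_one_slice_tensors_def N0_def by (auto simp: vec_lambda_inverse[OF UNIV_I])
qed

lemma slice_combination_scaleR:
  "slice_combination T (($) (x *\<^sub>R w)) = x *\<^sub>R slice_combination T (($) w)"
  by (simp add: slice_combination_def vec_eq_iff sum_distrib_left mult_ac)

lemma rank_le_one_scaleR: "rank_le_one M \<Longrightarrow> rank_le_one (x *\<^sub>R M)"
  unfolding rank_le_one_def by (simp add: mult_ac)

lemma closed_rank_one_slice_tensors: "closed (rank_one_slice_tensors :: (real^'c^'b^'a) set)"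
proof -
  let ?R = "{(w, T). rank_le_one (slice_combination T (($) w))} :: ((real^'c) \<times> (real^'c^'b^'a)) set"
  have eq: "rank_one_slice_tensors = {T. \<exists>w. w \<in> sphere 0 1 \<and> (w, T) \<in> ?R}" (is "_ = ?S")
  proof
    show "rank_one_slice_tensors \<subseteq> ?S"
    proof
      fix T :: "real^'c^'b^'a" assume "T \<in> rank_one_slice_tensors"
      then obtain w where "w \<noteq> 0" "rank_le_one (slice_combination T (($) w))"
        unfolding rank_one_slice_tensors_def by blast
      then show "T \<in> ?S"
        by (intro CollectI exI[of _ "(1 / norm w) *\<^sub>R w"])
          (simp add: slice_combination_scaleR rank_le_one_scaleR)
    qed
    show "?S \<subseteq> rank_one_slice_tensors"
    proof
      fix T :: "real^'c^'b^'a" assume "T \<in> ?S"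
      then obtain w where "norm w = 1" "rank_le_one (slice_combination T (($) w))" by auto
      then show "T \<in> rank_one_slice_tensors"
        unfolding rank_one_slice_tensors_def by (intro CollectI exI[of _ w]) auto
    qed
  qed
  have "closed ?R"
    unfolding rank_le_one_def slice_combination_def case_prod_beta
    by (intro closed_Collect_all closed_Collect_eq) (simp_all add: continuous_intros)
  then show ?thesis
    unfolding eq by (rule closed_compact_projection[OF compact_sphere])
qed

lemma rank_le_one_factor:
  assumes "rank_le_one M"
  obtains x y where "\<And>i j. M$i$j = x$i * y$j" "x = 0 \<or> (\<exists>i0. x$i0 = 1)"
proof (cases "M = 0")
  case True
  then show ?thesis using that[of 0 0] by simp
next
  case False
  then obtain p q where pq: "M$p$q \<noteq> 0" by (metis vec_eq_iff zero_index)
  have factor: "M$i$j = M$i$q / M$p$q * M$p$j" for i j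
  proof -
    have "M$i$j * M$p$q = M$i$q * M$p$j" using assms unfolding rank_le_one_def by blast
    then show ?thesis using pq by (simp add: field_simps)
  qed
  show ?thesis
  proof (rule that)
    show "M$i$j = (\<chi> i. M$i$q / M$p$q)$i * (\<chi> j. M$p$j)$j" for i j
      using factor[of i j] by simp
    show "(\<chi> i. M$i$q / M$p$q) = 0 \<or> (\<exists>i0. (\<chi> i. M$i$q / M$p$q)$i0 = 1)"
      using pq by (intro disjI2 exI[of _ p]) simp
  qed
qed

lemma differentiable_vec_lambda:
  fixes f :: "'m::real_normed_vector \<Rightarrow> 'b::euclidean_space^'n"
  assumes "\<And>i. (\<lambda>x. f x $ i) differentiable (at x)"
  shows "f differentiable (at x)"
  using assms by (intro differentiable_componentwise_within[THEN iffD2])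
    (auto simp: Basis_vec_def inner_axis)

lemma differentiable_tensor_entry: "(\<lambda>Q::real^'c^'b^'a. Q$a$b$c) differentiable F"
  by (intro bounded_linear_imp_differentiable bounded_linear_compose[OF bounded_linear_vec_nth]
      bounded_linear_vec_nth)

lemma negligible_tensor_entry_eq: "negligible {Q::real^'c^'b^'a. Q$a$b$c = r}"
proof -
  have "{Q::real^'c^'b^'a. Q$a$b$c = r} = {Q. axis a (axis b (axis c 1)) \<bullet> Q = r}"
    by (simp add: inner_axis')
  then show ?thesis
    using negligible_hyperplane[of "axis a (axis b (axis c 1)) :: real^'c^'b^'a"]
    by (simp add: axis_eq_0_iff)
qed

(* A tensor T with x y^T = T_k0 + (sum of w_k T_k over k ~= k0) is the image of the Q that agrees
   with T off the slice k0 and stores the w_k at the entries (1, g k, k0) and x, y in the rows 2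
   and 3 of that slice. Rescaling w and x achieves x = 0 or x_i = 1 for some i, so Q can be taken
   in a finite union of hyperplanes; this needs g injective on the remaining slices. *)
definition rank_one_slice_param_domain :: "'c \<Rightarrow> (real^'c^3^3) set" where
  "rank_one_slice_param_domain k0 =
     {Q. Q$2$1$k0 = 0} \<union> {Q. Q$2$1$k0 = 1} \<union> {Q. Q$2$2$k0 = 1} \<union> {Q. Q$2$3$k0 = 1}"

definition rank_one_slice_param :: "('c \<Rightarrow> 3) \<Rightarrow> 'c \<Rightarrow> real^'c^3^3 \<Rightarrow> real^'c^3^3" where
  "rank_one_slice_param g k0 Q = (\<chi> i j k. if k = k0
     then Q$2$i$k0 * Q$3$j$k0 - (\<Sum>k'\<in>UNIV - {k0}. Q$1$(g k')$k0 * Q$i$j$k')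
     else Q$i$j$k)"

lemma differentiable_rank_one_slice_param: "rank_one_slice_param g k0 differentiable (at Q)"
  unfolding rank_one_slice_param_def
proof (intro differentiable_vec_lambda, goal_cases)
  case (1 i j k)
  then show ?case
    by (cases "k = k0")
      (simp_all add: differentiable_tensor_entry differentiable_diff differentiable_mult differentiable_sum)
qed

lemma rank_one_slice_tensors_subset_param_image:
  fixes G :: "'c::finite \<Rightarrow> 'c \<Rightarrow> 3"
  assumes G: "\<And>k0. inj_on (G k0) (UNIV - {k0})"
  shows "(rank_one_slice_tensors :: (real^'c^3^3) set)
           \<subseteq> (\<Union>k0. rank_one_slice_param (G k0) k0 ` rank_one_slice_param_domain k0)"
proof
  fix T :: "real^'c^3^3"
  assume "T \<in> rank_one_slice_tensors"
  then obtain w where "w \<noteq> 0" "rank_le_one (slice_combination T (($) w))"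
    unfolding rank_one_slice_tensors_def by blast
  then obtain k0 where "w$k0 \<noteq> 0" by (metis vec_eq_iff zero_index)
  define w' where "w' = (1 / w$k0) *\<^sub>R w"
  have "w'$k0 = 1" using \<open>w$k0 \<noteq> 0\<close> by (simp add: w'_def)
  have "rank_le_one (slice_combination T (($) w'))"
    unfolding w'_def slice_combination_scaleR by (rule rank_le_one_scaleR) fact
  then obtain x y where xy: "\<And>i j. slice_combination T (($) w') $i$j = x$i * y$j"
    and x: "x = 0 \<or> (\<exists>i0. x$i0 = 1)"
    using rank_le_one_factor by blast
  define g where "g = G k0"
  define u where "u = (\<chi> l. if l \<in> g ` (UNIV - {k0}) then w'$(the_inv_into (UNIV - {k0}) g l) else 0)"
  have u: "u$(g k) = w'$k" if "k \<noteq> k0" for k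
    using G[of k0] that by (simp add: u_def g_def the_inv_into_f_f)
  define Q :: "real^'c^3^3" where
    "Q = (\<chi> i j k. if k = k0 then (if i = 1 then u$j else if i = 2 then x$j else y$j) else T$i$j$k)"
  have "Q \<in> rank_one_slice_param_domain k0"
    using x by (auto simp: rank_one_slice_param_domain_def Q_def) (metis exhaust_3)
  moreover have "rank_one_slice_param g k0 Q = T"
  proof -
    have "(\<Sum>k\<in>UNIV - {k0}. Q$1$(g k)$k0 * Q$i$j$k) = (\<Sum>k\<in>UNIV - {k0}. w'$k * T$i$j$k)" for i j
      by (intro sum.cong) (auto simp: Q_def u)
    moreover have "x$i * y$j = T$i$j$k0 + (\<Sum>k\<in>UNIV - {k0}. w'$k * T$i$j$k)" for i j
      using xy[of i j] \<open>w'$k0 = 1\<close> by (simp add: slice_combination_def sum.remove[of UNIV k0])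
    ultimately show ?thesis
      by (simp add: rank_one_slice_param_def vec_eq_iff Q_def)
  qed
  ultimately show "T \<in> (\<Union>k0. rank_one_slice_param (G k0) k0 ` rank_one_slice_param_domain k0)"
    unfolding g_def by blast
qed

lemma negligible_rank_one_slice_tensors:
  assumes "CARD('c) \<le> 4"
  shows "negligible (rank_one_slice_tensors :: (real^'c::finite^3^3) set)"
proof -
  have "\<exists>g :: 'c \<Rightarrow> 3. inj_on g (UNIV - {k0})" for k0
  proof -
    have "card (UNIV - {k0}) \<le> card (UNIV :: 3 set)" using assms by (simp add: card_Diff_singleton)
    then show ?thesis using card_le_inj[of "UNIV - {k0}" "UNIV :: 3 set"] by auto
  qed
  then obtain G :: "'c \<Rightarrow> 'c \<Rightarrow> 3" where G: "\<And>k0. inj_on (G k0) (UNIV - {k0})" by metis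
  have "negligible (rank_one_slice_param (G k0) k0 ` rank_one_slice_param_domain k0)" for k0
    unfolding rank_one_slice_param_domain_def
    by (intro negligible_differentiable_image_negligible negligible_Un negligible_tensor_entry_eq
        differentiable_at_imp_differentiable_on differentiable_rank_one_slice_param) auto
  then show ?thesis
    by (intro negligible_subset[OF _ rank_one_slice_tensors_subset_param_image[OF G]] negligible_Union) auto
qed

lemma subrank_less_card_if_not_rank_one_slice:
  fixes T :: "real^'c^'a^'a"
  assumes "T \<notin> rank_one_slice_tensors"
  shows "subrank T < CARD('a)"
  using assms tensor_restricts_to_unit_card_imp_rank_one_slice le_subrank_iff not_less by blast

lemma open_not_subset_rank_one_slice_tensors:
  fixes U :: "(real^'c^3^3) set"
  assumes "CARD('c) \<le> 4" "open U" "U \<noteq> {}"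
  obtains T where "T \<in> U" "T \<notin> rank_one_slice_tensors"
  using open_not_negligible[OF assms(2,3)] negligible_subset negligible_rank_one_slice_tensors[OF assms(1)]
  by blast

lemma typical_subrank_2:
  assumes "2 \<le> CARD('c)" "CARD('c) \<le> 4"
  shows "typical_subrank TYPE(real^'c::finite^3^3) 2"
proof -
  obtain k1 k2 :: 'c where "k1 \<noteq> k2"
    using ex_card[of 2 "UNIV :: 'c set"] assms(1) by (auto simp: card_2_iff)
  define T0 :: "real^'c^3^3" where
    "T0 = (\<chi> a b k. if (a, b, k) = (1, 1, k1) \<or> (a, b, k) = (2, 2, k2) then 1 else 0)"
  define U where "U = ball T0 (1/20) - rank_one_slice_tensors"
  have "open U" unfolding U_def using closed_rank_one_slice_tensors by (intro open_Diff) auto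
  moreover have "U \<noteq> {}"
  proof -
    obtain T where "T \<in> ball T0 (1/20)" "T \<notin> rank_one_slice_tensors"
      by (rule open_not_subset_rank_one_slice_tensors[OF assms(2), of "ball T0 (1/20)"]) auto
    then show ?thesis by (auto simp: U_def)
  qed
  moreover have "subrank T = 2" if "T \<in> U" for T
  proof -
    have "2 \<le> subrank T"
      unfolding le_subrank_iff using that \<open>k1 \<noteq> k2\<close>
      by (intro tensor_restricts_to_unit_2_near_two_units) (auto simp: U_def T0_def dist_commute)
    moreover have "subrank T < 3"
      using that subrank_less_card_if_not_rank_one_slice by (fastforce simp: U_def)
    ultimately show ?thesis by simp
  qed
  ultimately show ?thesis unfolding typical_subrank_def by blast
qed

lemma typical_subrank_eq_2:
  assumes "3 \<le> CARD('c)" "CARD('c) \<le> 4" and "typical_subrank TYPE(real^'c::finite^3^3) r"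
  shows "r = 2"
proof -
  obtain U :: "(real^'c^3^3) set" where U: "open U" "U \<noteq> {}" "\<And>T. T \<in> U \<Longrightarrow> subrank T = r"
    using assms(3) unfolding typical_subrank_def by blast
  obtain T0 e where "e > 0" "ball T0 e \<subseteq> U"
    using U(1,2) open_contains_ball by blast
  moreover obtain T where "dist T T0 < e" "tensor_restricts_to_unit T 2"
    using tensor_restricts_to_unit_2_dense[of e T0] assms(1) \<open>e > 0\<close> by force
  ultimately have "2 \<le> r" using U(3) le_subrank_iff by (metis dist_commute mem_ball subsetD)
  moreover obtain T' where "T' \<in> U" "T' \<notin> rank_one_slice_tensors"
    using open_not_subset_rank_one_slice_tensors[OF assms(2) U(1,2)] .
  then have "r < 3" using U(3) subrank_less_card_if_not_rank_one_slice by fastforce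
  ultimately show ?thesis by simp
qed

lemma typical_subranks_3x3:
  assumes "3 \<le> CARD('c)" "CARD('c) \<le> 4"
  shows "{r. typical_subrank TYPE(real^'c::finite^3^3) r} = {2}"
proof
  show "{r. typical_subrank TYPE(real^'c^3^3) r} \<subseteq> {2}"
    using typical_subrank_eq_2[OF assms] by blast
  show "{2} \<subseteq> {r. typical_subrank TYPE(real^'c^3^3) r}"
    using assms by (simp add: typical_subrank_2)
qed

theorem corollary4p6:
  shows "{r. typical_subrank TYPE(real^3^3^3) r} = {2}
       \<and> {r. typical_subrank TYPE(real^4^3^3) r} = {2}"
  by (simp add: typical_subranks_3x3)

end
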